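(* Let $c_1,\dots,c_7$ be real numbers and let $\mathcal{C}$ be the $6\times 6$ matrix \[ \mathcal{C}=\begin{pmatrix} 0 & c_5 & 0 & c_1 & 0 & 0 \\ c_4 & 0 & c_7 & 0 & c_2 & 0 \\ 0 & c_6 & 0 & 0 & 0 & c_3 \\ c_1 & 0 & 0 & 0 & c_5 & 0 \\ 0 & c_2 & 0 & c_4 & 0 & c_7 \\ 0 & 0 & c_3 & 0 & c_6 & 0 \end{pmatrix}. \] Then $\det\mathcal{C} = -\left(c_1c_2c_3 - c_1c_6c_7 - c_3c_4c_5\right)^2$. Consequently, $\mathcal{C}$ is non-singular (equivalently, for every vector $(I^1,\dots,I^6)^\top\in\mathbb{R}^6$ the linear system $(I^1,\dots,I^6)^\top=\mathcal{C}\,(dI_1,\dots,dI_6)^\top$ has a unique solution $(dI_1,\dots,dI_6)^\top$) if and only if $c_1c_2c_3 - c_1c_6c_7 - c_3c_4c_5 \neq 0$.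
   Context: In the paper, $c_1,c_2,c_3$ are contralateral and $c_4,\dots,c_7$ are ipsilateral coupling strengths in a network of six coupled oscillators (one per insect leg); the matrix $\mathcal{C}$ encodes how an external input added to each unit can be redistributed as perturbations $dI_j$ of the coupling terms. *)

theory Defs
  imports "Jordan_Normal_Form.Matrix" "Jordan_Normal_Form.Determinant"
begin

definition coupling_matrix ::
  "real \<Rightarrow> real \<Rightarrow> real \<Rightarrow> real \<Rightarrow> real \<Rightarrow> real \<Rightarrow> real \<Rightarrow> real mat" where
  "coupling_matrix c1 c2 c3 c4 c5 c6 c7 = mat_of_rows_list 6
     [[0,  c5, 0,  c1, 0,  0 ],
      [c4, 0,  c7, 0,  c2, 0 ],
      [0,  c6, 0,  0,  0,  c3],
      [c1, 0,  0,  0,  c5, 0 ],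
      [0,  c2, 0,  c4, 0,  c7],
      [0,  0,  c3, 0,  c6, 0 ]]"

end

theory Submission
  imports Defs
begin

text \<open>The coupling graph of the six legs is a ladder (two ipsilateral chains joined by three
contralateral rungs), hence bipartite with parts \<open>{1,3,5}\<close> and \<open>{2,4,6}\<close>. Listing
the units of one part before those of the other permutes rows and columns simultaneously, which
does not change the determinant, and turns \<open>\<C>\<close> into a block anti-diagonal matrix
whose two \<open>3 \<times> 3\<close> blocks both have determinant
\<open>D = c\<^sub>1c\<^sub>2c\<^sub>3 - c\<^sub>1c\<^sub>6c\<^sub>7 - c\<^sub>3c\<^sub>4c\<^sub>5\<close>; hence
\<open>det \<C> = (-1)\<^sup>3 D\<^sup>2\<close>.\<close>

lemma det_mat_Suc:
  fixes f :: "nat \<times> nat \<Rightarrow> 'a :: comm_ring_1"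
  shows "det (mat (Suc n) (Suc n) f) =
    (\<Sum>j<Suc n. f (0,j) * ((-1)^j * det (mat n n (\<lambda>(i,k). f (Suc i, insert_index j k)))))"
    (is "_ = (\<Sum>j<Suc n. f (0,j) * ((-1)^j * det (?minor j)))")
proof -
  let ?M = "mat (Suc n) (Suc n) f"
  have "det ?M = (\<Sum>j<Suc n. ?M $$ (0,j) * cofactor ?M 0 j)"
    by (rule laplace_expansion_row) auto
  also have "\<dots> = (\<Sum>j<Suc n. f (0,j) * ((-1)^j * det (?minor j)))"
  proof (rule sum.cong[OF refl])
    fix j assume j: "j \<in> {..<Suc n}"
    have "mat_delete ?M 0 j = ?minor j"
      by (rule eq_matI) (auto simp: mat_delete_def insert_index_def j)
    then show "?M $$ (0,j) * cofactor ?M 0 j = f (0,j) * ((-1)^j * det (?minor j))"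
      using j by (simp add: cofactor_def)
  qed
  finally show ?thesis .
qed

lemma det_carrier_mat_3:
  fixes A :: "'a :: comm_ring_1 mat"
  assumes "A \<in> carrier_mat 3 3"
  shows "det A =
      A $$ (0,0) * (A $$ (1,1) * A $$ (2,2) - A $$ (1,2) * A $$ (2,1))
    - A $$ (0,1) * (A $$ (1,0) * A $$ (2,2) - A $$ (1,2) * A $$ (2,0))
    + A $$ (0,2) * (A $$ (1,0) * A $$ (2,1) - A $$ (1,1) * A $$ (2,0))"
    (is "_ = ?rhs")
proof -
  have "det A = det (mat 3 3 (\<lambda>(i,j). A $$ (i,j)))"
    using assms by (intro arg_cong[of _ _ det] eq_matI) auto
  also have "\<dots> = ?rhs"
    by (simp add: numeral_eq_Suc det_mat_Suc insert_index_def algebra_simps)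
  finally show ?thesis .
qed

lemma det_permute_rows_cols:
  assumes A: "A \<in> carrier_mat n n" and p: "p permutes {0..<n}"
  shows "det (mat n n (\<lambda>(i,j). A $$ (p i, p j))) = det A"
proof -
  have p_lt: "i < n \<Longrightarrow> p i < n" for i
    using p by (simp add: permutes_in_image)
  let ?P = "mat n n (\<lambda>(i,j). A $$ (i, p j))"
  have P: "?P \<in> carrier_mat n n" by simp
  have "det (mat n n (\<lambda>(i,j). A $$ (p i, p j))) = det (mat n n (\<lambda>(i,j). ?P $$ (p i, j)))"
    by (intro arg_cong[of _ _ det] eq_matI) (auto simp: p_lt)
  also have "\<dots> = signof p * det ?P"
    by (rule det_permute_rows[OF P p])
  also have "det ?P = det (mat n n (\<lambda>(i,j). A\<^sup>T $$ (p i, j)))\<^sup>T"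
    using A by (intro arg_cong[of _ _ det] eq_matI) (auto simp: p_lt)
  also have "\<dots> = signof p * det A"
    using det_transpose det_permute_rows[OF _ p] A by (metis (no_types) mat_carrier transpose_carrier_mat)
  finally show ?thesis by (simp add: mult.assoc[symmetric] flip: of_int_mult)
qed

lemma det_anti_block_diag:
  fixes A B :: "'a :: idom mat"
  assumes A: "A \<in> carrier_mat n n" and B: "B \<in> carrier_mat n n"
  shows "det (four_block_mat (0\<^sub>m n n) A B (0\<^sub>m n n)) = (-1)^(n*n) * (det A * det B)"
proof -
  let ?M = "four_block_mat (0\<^sub>m n n) A B (0\<^sub>m n n)"
  have M: "?M \<in> carrier_mat (n + n) (n + n)"
    using A B by auto
  have "mat (n + n) (n + n) (\<lambda>(i,j). ?M $$ (i, if j < n then j + n else j - n))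
      = four_block_mat A (0\<^sub>m n n) (0\<^sub>m n n) B"
    using A B by (intro eq_matI) auto
  then show ?thesis
    using det_swap_cols[OF M] det_four_block_mat_upper_right_zero[OF A refl _ B] by simp
qed

text \<open>Indices are 0-based: the units 1, 3, 5 of the paper are listed before 2, 4, 6.\<close>

definition even_odd_order :: "nat \<Rightarrow> nat" where
  "even_odd_order i = (if i < 3 then 2 * i else if i < 6 then 2 * i - 5 else i)"

lemma even_odd_order_permutes: "even_odd_order permutes {0..<6}"
proof (rule bij_imp_permutes)
  show "bij_betw even_odd_order {0..<6} {0..<6}"
    unfolding bij_betw_def inj_on_def even_odd_order_def by (auto simp: image_iff Bex_def; presburger)
qed (simp add: even_odd_order_def)

lemma coupling_matrix_even_odd_order:
  "mat 6 6 (\<lambda>(i,j). coupling_matrix c1 c2 c3 c4 c5 c6 c7 $$ (even_odd_order i, even_odd_order j)) =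
    four_block_mat (0\<^sub>m 3 3)
      (mat_of_rows_list 3 [[c5, c1, 0], [c6, 0, c3], [c2, c4, c7]])
      (mat_of_rows_list 3 [[c4, c7, c2], [c1, 0, c5], [0, c3, c6]])
      (0\<^sub>m 3 3)"
  by (rule eq_matI) (auto simp: even_odd_order_def coupling_matrix_def mat_of_rows_list_def less_Suc_eq numeral_eq_Suc)

lemma coupling_matrix_carrier: "coupling_matrix c1 c2 c3 c4 c5 c6 c7 \<in> carrier_mat 6 6"
  by (simp add: coupling_matrix_def mat_of_rows_list_def numeral_eq_Suc)

lemma det_coupling_matrix:
  "det (coupling_matrix c1 c2 c3 c4 c5 c6 c7) = - ((c1*c2*c3 - c1*c6*c7 - c3*c4*c5)^2)"
proof -
  let ?C = "coupling_matrix c1 c2 c3 c4 c5 c6 c7"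
  define A where "A = mat_of_rows_list 3 [[c5, c1, 0], [c6, 0, c3], [c2, c4, c7]]"
  define B where "B = mat_of_rows_list 3 [[c4, c7, c2], [c1, 0, c5], [0, c3, c6]]"
  have A: "A \<in> carrier_mat 3 3" and B: "B \<in> carrier_mat 3 3"
    by (simp_all add: A_def B_def mat_of_rows_list_def numeral_eq_Suc)
  have "det ?C = det (mat 6 6 (\<lambda>(i,j). ?C $$ (even_odd_order i, even_odd_order j)))"
    by (rule det_permute_rows_cols[OF coupling_matrix_carrier even_odd_order_permutes, symmetric])
  also have "\<dots> = (-1)^(3*3) * (det A * det B)"
    unfolding coupling_matrix_even_odd_order A_def[symmetric] B_def[symmetric]
    by (rule det_anti_block_diag[OF A B])
  finally have "det ?C = - (det A * det B)"
    by simp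
  moreover have "det A = c1*c2*c3 - c1*c6*c7 - c3*c4*c5"
    unfolding det_carrier_mat_3[OF A] by (simp add: A_def mat_of_rows_list_def algebra_simps)
  moreover have "det B = c1*c2*c3 - c1*c6*c7 - c3*c4*c5"
    unfolding det_carrier_mat_3[OF B] by (simp add: B_def mat_of_rows_list_def algebra_simps)
  ultimately show ?thesis
    by (simp add: power2_eq_square)
qed

lemma det_nonzero_obtains_inverse:
  fixes A :: "'a :: field mat"
  assumes A: "A \<in> carrier_mat n n" and "det A \<noteq> 0"
  obtains B where "B \<in> carrier_mat n n" "B * A = 1\<^sub>m n" "A * B = 1\<^sub>m n"
proof -
  have "A \<in> Units (ring_mat TYPE('a) n undefined)"
    by (rule det_non_zero_imp_unit[OF assms])
  then show ?thesis
    using that unfolding Units_def ring_mat_def by auto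
qed

lemma invertible_mat_iff_det_nonzero:
  fixes A :: "'a :: field mat"
  assumes A: "A \<in> carrier_mat n n"
  shows "invertible_mat A \<longleftrightarrow> det A \<noteq> 0"
proof
  assume "invertible_mat A"
  then obtain B where AB: "A * B = 1\<^sub>m n" and BA: "B * A = 1\<^sub>m (dim_row B)"
    using A unfolding invertible_mat_def inverts_mat_def by auto
  have "dim_col B = n"
    using arg_cong[OF AB, of dim_col] by simp
  moreover have "dim_row B = n"
    using arg_cong[OF BA, of dim_col] A by simp
  ultimately have "det A * det B = 1"
    using det_mult[OF A, of B] AB by auto
  then show "det A \<noteq> 0"
    by auto
next
  assume "det A \<noteq> 0"
  then obtain B where "B \<in> carrier_mat n n" "B * A = 1\<^sub>m n" "A * B = 1\<^sub>m n"
    using det_nonzero_obtains_inverse[OF A] by blast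
  then show "invertible_mat A"
    using A unfolding invertible_mat_def inverts_mat_def by auto
qed

lemma unique_solvability_iff_det_nonzero:
  fixes A :: "'a :: field mat"
  assumes A: "A \<in> carrier_mat n n"
  shows "(\<forall>b \<in> carrier_vec n. \<exists>!x. x \<in> carrier_vec n \<and> b = A *\<^sub>v x) \<longleftrightarrow> det A \<noteq> 0"
proof
  assume unique: "\<forall>b \<in> carrier_vec n. \<exists>!x. x \<in> carrier_vec n \<and> b = A *\<^sub>v x"
  show "det A \<noteq> 0"
  proof
    assume "det A = 0"
    then obtain v where v: "v \<in> carrier_vec n" "v \<noteq> 0\<^sub>v n" "A *\<^sub>v v = 0\<^sub>v n"
      using det_0_iff_vec_prod_zero[OF A] by auto
    have "A *\<^sub>v 0\<^sub>v n = 0\<^sub>v n"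
      using A by (intro eq_vecI) auto
    then show False
      using unique v by (metis zero_carrier_vec)
  qed
next
  assume "det A \<noteq> 0"
  then obtain B where B: "B \<in> carrier_mat n n" and BA: "B * A = 1\<^sub>m n" and AB: "A * B = 1\<^sub>m n"
    using det_nonzero_obtains_inverse[OF A] by blast
  show "\<forall>b \<in> carrier_vec n. \<exists>!x. x \<in> carrier_vec n \<and> b = A *\<^sub>v x"
  proof
    fix b :: "'a vec" assume b: "b \<in> carrier_vec n"
    show "\<exists>!x. x \<in> carrier_vec n \<and> b = A *\<^sub>v x"
    proof
      show "B *\<^sub>v b \<in> carrier_vec n \<and> b = A *\<^sub>v (B *\<^sub>v b)"
        using A B b AB by (metis assoc_mult_mat_vec mult_mat_vec_carrier one_mult_mat_vec)
    next
      fix x assume "x \<in> carrier_vec n \<and> b = A *\<^sub>v x"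
      then show "x = B *\<^sub>v b"
        using A B BA by (metis assoc_mult_mat_vec one_mult_mat_vec)
    qed
  qed
qed

theorem mainTheorem1:
  fixes c1 c2 c3 c4 c5 c6 c7 :: real
  defines "C \<equiv> coupling_matrix c1 c2 c3 c4 c5 c6 c7"
  shows "det C = - ((c1*c2*c3 - c1*c6*c7 - c3*c4*c5)^2)
    \<and> (invertible_mat C \<longleftrightarrow> c1*c2*c3 - c1*c6*c7 - c3*c4*c5 \<noteq> 0)
    \<and> ((\<forall>I \<in> carrier_vec 6. \<exists>!dI. dI \<in> carrier_vec 6 \<and> I = C *\<^sub>v dI)
           \<longleftrightarrow> c1*c2*c3 - c1*c6*c7 - c3*c4*c5 \<noteq> 0)"
  using det_coupling_matrix[of c1 c2 c3 c4 c5 c6 c7]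
    invertible_mat_iff_det_nonzero[OF coupling_matrix_carrier]
    unique_solvability_iff_det_nonzero[OF coupling_matrix_carrier]
  unfolding C_def by auto

end
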